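(* Let $\Sigma$ be an alphabet. Then $\mathrm{RevL}(\mathbb{B},\Sigma)\subseteq\mathrm{RevL}(\mathbb{F}_2,\Sigma)$.
   Context: $\mathbb{F}_2$ is the two-element field and $\mathbb{B}=(\{0,1\},\lor,\land,0,1)$ the Boolean semiring. For a semiring $S$ and finite nonempty alphabet $\Sigma$, a series is a map $r\colon\Sigma^*\to S$ with value $(r,w)$ and support $\mathrm{supp}(r)=\{w\mid(r,w)\neq0\}$. A weighted automaton over $S$ and $\Sigma$ is $\mathcal{A}=(Q,\sigma,\iota,\tau)$ with $Q$ finite, $\sigma\colon Q\times\Sigma\times Q\to S$, $\iota,\tau\colon Q\to S$; a run on $w=a_1\cdots a_t$ is $q_0a_1q_1\cdots a_tq_t$ with all $\sigma(q_{k-1},a_k,q_k)\neq0$, of weight $\iota(q_0)\sigma(q_0,a_1,q_1)\cdots\sigma(q_{t-1},a_t,q_t)\tau(q_t)$, and $(\|\mathcal{A}\|,w)$ is the sum of weights of all runs on $w$. $\mathcal{A}$ is reversible if for all $p,p',q,q'\in Q$, $a\in\Sigma$: $\sigma(p,a,q)\neq0\neq\sigma(p,a,q')$ implies $q=q'$, and $\sigma(p,a,q)\neq0\neq\sigma(p',a,q)$ implies $p=p'$. $\mathrm{RevL}(S,\Sigma)$ is the set of supports of series realised by reversible weighted automata over $S$ and $\Sigma$. Thus $\mathrm{RevL}(\mathbb{B},\Sigma)$ is the set of languages recognised by reversible finite automata in the sense of Pin: nondeterministic finite automata whose transition relation is both deterministic and codeterministic, with arbitrary sets of initial and final states. *)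

theory Defs
  imports Main "HOL-Library.Z2"
begin

datatype boolsr = BF | BT

instantiation boolsr :: "{comm_semiring_1}"
begin
definition zero_boolsr :: boolsr where "zero_boolsr = BF"
definition one_boolsr :: boolsr where "one_boolsr = BT"
fun plus_boolsr :: "boolsr \<Rightarrow> boolsr \<Rightarrow> boolsr" where
  "plus_boolsr BF y = y" | "plus_boolsr BT y = BT"
fun times_boolsr :: "boolsr \<Rightarrow> boolsr \<Rightarrow> boolsr" where
  "times_boolsr BF y = BF" | "times_boolsr BT y = y"
instance
proof
  fix a b c :: boolsr
  show "a + b + c = a + (b + c)" by (cases a; cases b; cases c) auto
  show "a + b = b + a" by (cases a; cases b) auto
  show "0 + a = a" by (simp add: zero_boolsr_def)
  show "a * b * c = a * (b * c)" by (cases a; cases b; cases c) auto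
  show "a * b = b * a" by (cases a; cases b) auto
  show "1 * a = a" by (simp add: one_boolsr_def)
  show "(a + b) * c = a * c + b * c" by (cases a; cases b; cases c) auto
  show "0 * a = 0" by (simp add: zero_boolsr_def)
  show "a * 0 = 0" by (cases a) (auto simp: zero_boolsr_def)
  show "(0::boolsr) \<noteq> 1" by (simp add: zero_boolsr_def one_boolsr_def)
qed
end

text \<open>Values of sigma, iota, tau
  outside Q are irrelevant (runs only use states of Q).\<close>

record ('a, 's) wautomaton =
  states :: "nat set"
  trans :: "nat \<Rightarrow> 'a \<Rightarrow> nat \<Rightarrow> 's"
  init  :: "nat \<Rightarrow> 's"
  fin   :: "nat \<Rightarrow> 's"

definition is_run :: "('a, 's::zero) wautomaton \<Rightarrow> 'a list \<Rightarrow> nat list \<Rightarrow> bool" where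
  "is_run A w qs \<longleftrightarrow> length qs = Suc (length w) \<and> set qs \<subseteq> states A \<and>
     (\<forall>k < length w. trans A (qs ! k) (w ! k) (qs ! Suc k) \<noteq> 0)"

definition run_weight :: "('a, 's::monoid_mult) wautomaton \<Rightarrow> 'a list \<Rightarrow> nat list \<Rightarrow> 's" where
  "run_weight A w qs =
     foldl (*) (init A (qs ! 0)) (map (\<lambda>k. trans A (qs ! k) (w ! k) (qs ! Suc k)) [0..<length w])
     * fin A (qs ! length w)"

text \<open>(||A||, w) = sum of weights of all runs on w (a finite set when Q is finite).\<close>

definition behaviour :: "('a, 's::semiring_1) wautomaton \<Rightarrow> 'a list \<Rightarrow> 's" where
  "behaviour A w = (\<Sum>qs \<in> {qs. is_run A w qs}. run_weight A w qs)"

definition support :: "('a list \<Rightarrow> 's::zero) \<Rightarrow> 'a list set" where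
  "support r = {w. r w \<noteq> 0}"

definition reversible :: "('a, 's::zero) wautomaton \<Rightarrow> bool" where
  "reversible A \<longleftrightarrow>
     (\<forall>p\<in>states A. \<forall>q\<in>states A. \<forall>q'\<in>states A. \<forall>a.
        trans A p a q \<noteq> 0 \<and> trans A p a q' \<noteq> 0 \<longrightarrow> q = q') \<and>
     (\<forall>p\<in>states A. \<forall>p'\<in>states A. \<forall>q\<in>states A. \<forall>a.
        trans A p a q \<noteq> 0 \<and> trans A p' a q \<noteq> 0 \<longrightarrow> p = p')"

text \<open>RevL(S, Sigma), where S is given by the type 's and the alphabet Sigma is the
  finite (nonempty) type 'a.\<close>

definition RevL :: "'s::semiring_1 itself \<Rightarrow> 'a::finite itself \<Rightarrow> 'a list set set" where
  "RevL S Sig = {support (behaviour A) | A :: ('a, 's) wautomaton.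
                    finite (states A) \<and> reversible A}"

end

theory Submission
  imports Defs "HOL-Library.Nat_Bijection"
begin

(* A reversible Boolean automaton is deterministic, so w is accepted iff the set S_w of
   initial states from which w leads to a final state is nonempty. Run the subset
   construction, but let a set X of states move on a letter a (to its image) only if every
   state of X has an a-successor; codeterminism then makes this image map injective, so the
   subset automaton is again reversible. Declaring X initial iff it is a nonempty set of
   initial states and final iff it consists of final states, the accepting runs of the
   subset automaton on w start exactly at the nonempty subsets of S_w. Over F_2 it thus
   assigns to w the parity of 2^|S_w| - 1, which is 1 iff S_w is nonempty. *)

lemma is_run_Nil: "is_run A [] qs \<longleftrightarrow> (\<exists>p\<in>states A. qs = [p])"
  unfolding is_run_def by (cases qs) auto

lemma is_run_Cons:
  "is_run A (a # w) qs \<longleftrightarrow>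
      (\<exists>p qs'. qs = p # qs' \<and> p \<in> states A \<and> is_run A w qs' \<and>
                trans A p a (qs' ! 0) \<noteq> 0)"
  unfolding is_run_def by (cases qs) (auto simp: All_less_Suc2)

fun reach :: "('a, 's::zero) wautomaton \<Rightarrow> nat \<Rightarrow> 'a list \<Rightarrow> nat \<Rightarrow> bool" where
  "reach A p [] q \<longleftrightarrow> p \<in> states A \<and> q = p"
| "reach A p (a # w) q \<longleftrightarrow> p \<in> states A \<and> (\<exists>p'. trans A p a p' \<noteq> 0 \<and> reach A p' w q)"

lemma reach_in_states: "reach A p w q \<Longrightarrow> p \<in> states A \<and> q \<in> states A"
  by (induction w arbitrary: p) auto

lemma reach_iff_run:
  "reach A p w q \<longleftrightarrow> (\<exists>qs. is_run A w qs \<and> qs ! 0 = p \<and> qs ! length w = q)"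
proof (induction w arbitrary: p)
  case Nil
  then show ?case by (auto simp: is_run_Nil)
next
  case (Cons a w)
  then show ?case by (fastforce simp: is_run_Cons)
qed

lemma finite_runs: "finite (states A) \<Longrightarrow> finite {qs. is_run A w qs}"
  by (rule finite_subset[OF _ finite_lists_length_eq[of "states A" "Suc (length w)"]])
     (auto simp: is_run_def)

definition deterministic :: "('a, 's::zero) wautomaton \<Rightarrow> bool" where
  "deterministic A \<longleftrightarrow> (\<forall>p\<in>states A. \<forall>q\<in>states A. \<forall>q'\<in>states A. \<forall>a.
        trans A p a q \<noteq> 0 \<and> trans A p a q' \<noteq> 0 \<longrightarrow> q = q')"

lemma reversible_imp_deterministic: "reversible A \<Longrightarrow> deterministic A"
  unfolding reversible_def deterministic_def by blast

lemma deterministic_run_unique: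
  assumes "deterministic A"
  shows "is_run A w qs \<Longrightarrow> is_run A w qs' \<Longrightarrow> qs ! 0 = qs' ! 0 \<Longrightarrow> qs = qs'"
proof (induction w arbitrary: qs qs')
  case Nil
  then show ?case by (auto simp: is_run_Nil)
next
  case (Cons a w)
  from Cons.prems(1) obtain p r
    where qs: "qs = p # r" "p \<in> states A" "is_run A w r" "trans A p a (r ! 0) \<noteq> 0"
    by (auto simp: is_run_Cons)
  from Cons.prems(2,3) qs obtain r'
    where qs': "qs' = p # r'" "is_run A w r'" "trans A p a (r' ! 0) \<noteq> 0"
    by (auto simp: is_run_Cons)
  have "r ! 0 \<in> states A" "r' ! 0 \<in> states A"
    using qs(3) qs'(2) by (auto simp: is_run_def)
  with assms qs qs' have "r ! 0 = r' ! 0" unfolding deterministic_def by blast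
  with Cons.IH qs qs' show ?case by blast
qed

lemma deterministic_reach_unique:
  "deterministic A \<Longrightarrow> reach A p w q \<Longrightarrow> reach A p w q' \<Longrightarrow> q = q'"
  unfolding reach_iff_run using deterministic_run_unique by blast

definition zero_one_weighted :: "('a, 's::zero_neq_one) wautomaton \<Rightarrow> bool" where
  "zero_one_weighted A \<longleftrightarrow>
     (\<forall>p a q. trans A p a q \<in> {0, 1}) \<and> (\<forall>p. init A p \<in> {0, 1}) \<and> (\<forall>q. fin A q \<in> {0, 1})"

definition accepting_starts :: "('a, 's::zero) wautomaton \<Rightarrow> 'a list \<Rightarrow> nat set" where
  "accepting_starts A w = {p. init A p \<noteq> 0 \<and> (\<exists>q. reach A p w q \<and> fin A q \<noteq> 0)}"

lemma accepting_starts_subset_states: "accepting_starts A w \<subseteq> states A"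
  unfolding accepting_starts_def using reach_in_states by blast

lemma run_weight_zero_one_weighted:
  fixes A :: "('a, 's::semiring_1) wautomaton"
  assumes "zero_one_weighted A" and "is_run A w qs"
  shows "run_weight A w qs = init A (qs ! 0) * fin A (qs ! length w)"
proof -
  have foldl_ones: "foldl (*) x ys = x" if "set ys \<subseteq> {1}" for x :: 's and ys
    using that by (induction ys arbitrary: x) auto
  have "set (map (\<lambda>k. trans A (qs ! k) (w ! k) (qs ! Suc k)) [0..<length w]) \<subseteq> {1}"
    using assms unfolding zero_one_weighted_def is_run_def by fastforce
  then show ?thesis unfolding run_weight_def by (simp add: foldl_ones)
qed

lemma behaviour_deterministic_zero_one_weighted:
  fixes A :: "('a, 's::semiring_1) wautomaton"
  assumes fin: "finite (states A)" and det: "deterministic A" and zo: "zero_one_weighted A"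
  shows "behaviour A w = of_nat (card (accepting_starts A w))"
proof -
  define R where "R = {qs. is_run A w qs}"
  define accepting
    where "accepting qs \<longleftrightarrow> init A (qs ! 0) \<noteq> 0 \<and> fin A (qs ! length w) \<noteq> 0" for qs
  have "init A p * fin A q = of_bool (init A p \<noteq> 0 \<and> fin A q \<noteq> 0)" for p q
  proof -
    have "init A p \<in> {0, 1}" "fin A q \<in> {0, 1}"
      using zo unfolding zero_one_weighted_def by blast+
    then show ?thesis by auto
  qed
  then have "behaviour A w = (\<Sum>qs\<in>R. of_bool (accepting qs))"
    unfolding behaviour_def R_def accepting_def
    by (intro sum.cong) (simp_all add: run_weight_zero_one_weighted[OF zo])
  also have "\<dots> = of_nat (card (R \<inter> Collect accepting))"
    using finite_runs[OF fin] unfolding R_def by simp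
  also have "card (R \<inter> Collect accepting) = card ((\<lambda>qs. qs ! 0) ` (R \<inter> Collect accepting))"
    using deterministic_run_unique[OF det] unfolding R_def
    by (intro card_image[symmetric] inj_onI) blast
  also have "(\<lambda>qs. qs ! 0) ` (R \<inter> Collect accepting) = accepting_starts A w"
    unfolding accepting_starts_def R_def accepting_def reach_iff_run by blast
  finally show ?thesis .
qed

lemma boolsr_zero_one: "(x::boolsr) \<in> {0, 1}"
  by (cases x) (simp_all add: zero_boolsr_def one_boolsr_def)

lemma of_nat_boolsr_eq_0_iff: "(of_nat n :: boolsr) = 0 \<longleftrightarrow> n = 0"
  by (cases n) (simp_all add: zero_boolsr_def one_boolsr_def)

lemma support_behaviour_boolsr:
  fixes A :: "('a, boolsr) wautomaton"
  assumes "finite (states A)" and "deterministic A"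
  shows "support (behaviour A) = {w. accepting_starts A w \<noteq> {}}"
proof -
  have "zero_one_weighted A"
    unfolding zero_one_weighted_def using boolsr_zero_one by blast
  moreover have "finite (accepting_starts A w)" for w
    using assms(1) accepting_starts_subset_states finite_subset by blast
  ultimately show ?thesis
    using assms
    by (simp add: support_def behaviour_deterministic_zero_one_weighted of_nat_boolsr_eq_0_iff)
qed

definition successors :: "('a, 's::zero) wautomaton \<Rightarrow> 'a \<Rightarrow> nat set \<Rightarrow> nat set" where
  "successors A a X = {q \<in> states A. \<exists>p\<in>X. trans A p a q \<noteq> 0}"

definition enabled :: "('a, 's::zero) wautomaton \<Rightarrow> 'a \<Rightarrow> nat set \<Rightarrow> bool" where
  "enabled A a X \<longleftrightarrow> (\<forall>p\<in>X. \<exists>q\<in>states A. trans A p a q \<noteq> 0)"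

definition subset_automaton :: "('a, 's::zero) wautomaton \<Rightarrow> ('a, 't::zero_neq_one) wautomaton" where
  "subset_automaton A =
     \<lparr>states = set_encode ` Pow (states A),
      trans = (\<lambda>n a m. of_bool (enabled A a (set_decode n) \<and>
                                 m = set_encode (successors A a (set_decode n)))),
      init = (\<lambda>n. of_bool (set_decode n \<noteq> {} \<and> (\<forall>p\<in>set_decode n. init A p \<noteq> 0))),
      fin = (\<lambda>n. of_bool (\<forall>p\<in>set_decode n. fin A p \<noteq> 0))\<rparr>"

lemma states_subset_automaton: "states (subset_automaton A) = set_encode ` Pow (states A)"
  by (simp add: subset_automaton_def)

lemma finite_states_subset_automaton:
  "finite (states A) \<Longrightarrow> finite (states (subset_automaton A))"
  by (simp add: states_subset_automaton)

lemma subset_automaton_set_encode: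
  assumes "finite X"
  shows "trans (subset_automaton A) (set_encode X) a m =
           of_bool (enabled A a X \<and> m = set_encode (successors A a X))"
    and "init (subset_automaton A) (set_encode X) = of_bool (X \<noteq> {} \<and> (\<forall>p\<in>X. init A p \<noteq> 0))"
    and "fin (subset_automaton A) (set_encode X) = of_bool (\<forall>p\<in>X. fin A p \<noteq> 0)"
  using assms by (simp_all add: subset_automaton_def)

lemma zero_one_weighted_subset_automaton: "zero_one_weighted (subset_automaton A)"
  by (auto simp: zero_one_weighted_def subset_automaton_def)

lemma deterministic_subset_automaton: "deterministic (subset_automaton A)"
  by (auto simp: deterministic_def subset_automaton_def)

lemma successors_subset_states: "successors A a X \<subseteq> states A"
  unfolding successors_def by blast

lemma successors_subset_imp_subset:
  assumes "reversible A" and "X \<subseteq> states A" "Y \<subseteq> states A" and "enabled A a X"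
    and "successors A a X \<subseteq> successors A a Y"
  shows "X \<subseteq> Y"
proof
  fix p assume "p \<in> X"
  then obtain q where q: "q \<in> states A" "trans A p a q \<noteq> 0"
    using assms(4) unfolding enabled_def by blast
  then have "q \<in> successors A a Y"
    using \<open>p \<in> X\<close> assms(5) unfolding successors_def by blast
  then obtain p' where "p' \<in> Y" "trans A p' a q \<noteq> 0"
    unfolding successors_def by blast
  with assms(1-3) q \<open>p \<in> X\<close> have "p = p'"
    unfolding reversible_def by blast
  with \<open>p' \<in> Y\<close> show "p \<in> Y" by simp
qed

lemma reversible_subset_automaton:
  assumes "finite (states A)" and "reversible A"
  shows "reversible (subset_automaton A)"
proof -
  have finite: "finite X" if "X \<subseteq> states A" for X
    using assms(1) that finite_subset by blast
  have "X = Y"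
    if "X \<subseteq> states A" "Y \<subseteq> states A"
      and "trans (subset_automaton A) (set_encode X) a m \<noteq> 0"
      and "trans (subset_automaton A) (set_encode Y) a m \<noteq> 0" for X Y a m
  proof -
    have "enabled A a X" "enabled A a Y" "successors A a X = successors A a Y"
      using that finite[OF successors_subset_states]
      by (simp_all add: subset_automaton_set_encode finite set_encode_eq)
    with that(1,2) show "X = Y"
      using successors_subset_imp_subset[OF assms(2)] by blast
  qed
  then show ?thesis
    using deterministic_subset_automaton[of A]
    unfolding reversible_def deterministic_def states_subset_automaton by blast
qed

lemma reach_Cons_via_successors:
  "X \<subseteq> states A \<Longrightarrow>
     {q. \<exists>p\<in>successors A a X. reach A p w q} = {q. \<exists>p\<in>X. reach A p (a # w) q}"
  unfolding successors_def using reach_in_states by fastforce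

lemma enabled_and_successors_reach_iff:
  assumes "deterministic A" and "X \<subseteq> states A"
  shows "enabled A a X \<and> (\<forall>p\<in>successors A a X. \<exists>q. reach A p w q) \<longleftrightarrow>
           (\<forall>p\<in>X. \<exists>q. reach A p (a # w) q)"
proof
  assume "enabled A a X \<and> (\<forall>p\<in>successors A a X. \<exists>q. reach A p w q)"
  with assms(2) show "\<forall>p\<in>X. \<exists>q. reach A p (a # w) q"
    unfolding enabled_def successors_def by fastforce
next
  assume reach: "\<forall>p\<in>X. \<exists>q. reach A p (a # w) q"
  then have "enabled A a X"
    unfolding enabled_def using reach_in_states by fastforce
  moreover have "\<forall>p'\<in>successors A a X. \<exists>q. reach A p' w q"
  proof
    fix p' assume "p' \<in> successors A a X"
    then obtain p where p: "p \<in> X" "p' \<in> states A" "trans A p a p' \<noteq> 0"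
      unfolding successors_def by blast
    with reach obtain p'' q where "trans A p a p'' \<noteq> 0" "reach A p'' w q"
      by auto
    moreover from this have "p'' = p'"
      using assms p reach_in_states unfolding deterministic_def by blast
    ultimately show "\<exists>q. reach A p' w q" by blast
  qed
  ultimately show "enabled A a X \<and> (\<forall>p\<in>successors A a X. \<exists>q. reach A p w q)" ..
qed

lemma reach_subset_automaton:
  fixes A :: "('a, 's::zero) wautomaton"
  assumes "finite (states A)" and "deterministic A" and "X \<subseteq> states A"
  shows "reach (subset_automaton A :: ('a, 't::zero_neq_one) wautomaton) (set_encode X) w m \<longleftrightarrow>
           (\<forall>p\<in>X. \<exists>q. reach A p w q) \<and> m = set_encode {q. \<exists>p\<in>X. reach A p w q}"
  using assms(3)
proof (induction w arbitrary: X m)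
  case Nil
  then have "{q. \<exists>p\<in>X. reach A p [] q} = X" by auto
  with Nil show ?case by (auto simp: states_subset_automaton)
next
  case (Cons a w)
  have "finite X" using Cons.prems assms(1) finite_subset by blast
  let ?B = "subset_automaton A :: ('a, 't) wautomaton"
  have "reach ?B (set_encode X) (a # w) m \<longleftrightarrow>
      enabled A a X \<and> reach ?B (set_encode (successors A a X)) w m"
    using Cons.prems \<open>finite X\<close> by (auto simp: states_subset_automaton subset_automaton_set_encode)
  also have "\<dots> \<longleftrightarrow> enabled A a X \<and> (\<forall>p\<in>successors A a X. \<exists>q. reach A p w q) \<and>
      m = set_encode {q. \<exists>p\<in>successors A a X. reach A p w q}"
    using Cons.IH[OF successors_subset_states] by blast
  also have "\<dots> \<longleftrightarrow> (\<forall>p\<in>X. \<exists>q. reach A p (a # w) q) \<and>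
      m = set_encode {q. \<exists>p\<in>X. reach A p (a # w) q}"
    by (simp only: conj_assoc[symmetric] enabled_and_successors_reach_iff[OF assms(2) Cons.prems]
        reach_Cons_via_successors[OF Cons.prems])
  finally show ?case .
qed

lemma set_encode_in_accepting_starts_subset_automaton:
  fixes A :: "('a, 's::zero) wautomaton"
  assumes "finite (states A)" and "deterministic A" and "X \<subseteq> states A"
  shows "set_encode X \<in> accepting_starts (subset_automaton A :: ('a, 't::zero_neq_one) wautomaton) w
           \<longleftrightarrow> X \<noteq> {} \<and> X \<subseteq> accepting_starts A w"
proof -
  let ?B = "subset_automaton A :: ('a, 't) wautomaton"
  define E where "E = {q. \<exists>p\<in>X. reach A p w q}"
  have "finite X"
    using assms(1,3) finite_subset by blast
  have "E \<subseteq> states A"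
    unfolding E_def using reach_in_states by blast
  then have "finite E"
    using assms(1) finite_subset by blast
  have "set_encode X \<in> accepting_starts ?B w \<longleftrightarrow>
      init ?B (set_encode X) \<noteq> 0 \<and> (\<forall>p\<in>X. \<exists>q. reach A p w q) \<and> fin ?B (set_encode E) \<noteq> 0"
    unfolding accepting_starts_def E_def by (simp add: reach_subset_automaton[OF assms])
  also have "\<dots> \<longleftrightarrow>
      X \<noteq> {} \<and> (\<forall>p\<in>X. init A p \<noteq> 0) \<and> (\<forall>p\<in>X. \<exists>q. reach A p w q) \<and> (\<forall>q\<in>E. fin A q \<noteq> 0)"
    using \<open>finite X\<close> \<open>finite E\<close> by (simp add: subset_automaton_set_encode)
  also have "\<dots> \<longleftrightarrow> X \<noteq> {} \<and> X \<subseteq> accepting_starts A w"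
    unfolding accepting_starts_def E_def using deterministic_reach_unique[OF assms(2)] by blast
  finally show ?thesis .
qed

lemma accepting_starts_subset_automaton:
  fixes A :: "('a, 's::zero) wautomaton"
  assumes "finite (states A)" and "deterministic A"
  shows "accepting_starts (subset_automaton A :: ('a, 't::zero_neq_one) wautomaton) w =
           set_encode ` (Pow (accepting_starts A w) - {{}})"
proof
  let ?B = "subset_automaton A :: ('a, 't) wautomaton"
  show "accepting_starts ?B w \<subseteq> set_encode ` (Pow (accepting_starts A w) - {{}})"
  proof
    fix n assume n: "n \<in> accepting_starts ?B w"
    then obtain X where X: "X \<subseteq> states A" "n = set_encode X"
      using accepting_starts_subset_states[of ?B w] by (auto simp: states_subset_automaton)
    have "n \<in> accepting_starts ?B w \<longleftrightarrow> X \<noteq> {} \<and> X \<subseteq> accepting_starts A w"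
      unfolding X(2) by (rule set_encode_in_accepting_starts_subset_automaton[OF assms X(1)])
    with n X(2) show "n \<in> set_encode ` (Pow (accepting_starts A w) - {{}})" by blast
  qed
  show "set_encode ` (Pow (accepting_starts A w) - {{}}) \<subseteq> accepting_starts ?B w"
  proof
    fix n assume "n \<in> set_encode ` (Pow (accepting_starts A w) - {{}})"
    then obtain X where X: "X \<noteq> {}" "X \<subseteq> accepting_starts A w" "n = set_encode X"
      by blast
    then have "X \<subseteq> states A"
      using accepting_starts_subset_states by blast
    have "n \<in> accepting_starts ?B w \<longleftrightarrow> X \<noteq> {} \<and> X \<subseteq> accepting_starts A w"
      unfolding X(3) by (rule set_encode_in_accepting_starts_subset_automaton[OF assms \<open>X \<subseteq> states A\<close>])
    with X(1,2) show "n \<in> accepting_starts ?B w" by blast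
  qed
qed

lemma card_accepting_starts_subset_automaton:
  fixes A :: "('a, 's::zero) wautomaton"
  assumes "finite (states A)" and "deterministic A"
  shows "card (accepting_starts (subset_automaton A :: ('a, 't::zero_neq_one) wautomaton) w) =
           2 ^ card (accepting_starts A w) - 1"
proof -
  have "finite (accepting_starts A w)"
    using assms(1) accepting_starts_subset_states finite_subset by blast
  moreover have "inj_on set_encode (Pow (accepting_starts A w) - {{}})"
    using calculation by (intro inj_onI) (auto simp: set_encode_eq finite_subset)
  ultimately show ?thesis
    by (simp add: accepting_starts_subset_automaton[OF assms] card_image card_Diff_singleton card_Pow)
qed

lemma of_nat_bit_eq_0_iff: "(of_nat n :: bit) = 0 \<longleftrightarrow> even n"
  by (induction n) auto

lemma support_behaviour_subset_automaton:
  assumes "finite (states A)" and "deterministic A"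
  shows "support (behaviour (subset_automaton A :: ('a, bit) wautomaton)) =
           {w. accepting_starts A w \<noteq> {}}"
proof -
  have "finite (accepting_starts A w)" for w
    using assms(1) accepting_starts_subset_states finite_subset by blast
  then show ?thesis
    using assms
    by (simp add: support_def behaviour_deterministic_zero_one_weighted finite_states_subset_automaton
        deterministic_subset_automaton zero_one_weighted_subset_automaton
        card_accepting_starts_subset_automaton of_nat_bit_eq_0_iff)
qed

theorem lemma1:
  "RevL TYPE(boolsr) TYPE('a::finite) \<subseteq> RevL TYPE(bit) TYPE('a::finite)"
proof
  fix L assume "L \<in> RevL TYPE(boolsr) TYPE('a::finite)"
  then obtain A :: "('a, boolsr) wautomaton"
    where A: "finite (states A)" "reversible A" and L: "L = support (behaviour A)"
    unfolding RevL_def by blast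
  let ?B = "subset_automaton A :: ('a, bit) wautomaton"
  have "deterministic A"
    using A(2) by (rule reversible_imp_deterministic)
  then have "support (behaviour ?B) = L"
    using A(1) L by (simp add: support_behaviour_subset_automaton support_behaviour_boolsr)
  moreover have "finite (states ?B)" "reversible ?B"
    using A by (simp_all add: finite_states_subset_automaton reversible_subset_automaton)
  ultimately show "L \<in> RevL TYPE(bit) TYPE('a::finite)"
    unfolding RevL_def by blast
qed

end
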